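(* Let $\mathcal{X}=\{x^{(1)},\dots,x^{(L)}\}\subset\mathbb{C}$ with $L$ distinct symbols. If a constant composition $(n,M,\mathcal{X})$-code $\mathscr{C}$ with $P_{\mathscr{C}}(x^{(\ell)})>0$ for all $\ell$ is an $(n,M,\mathcal{X},\epsilon,B,\delta)$-code for the complex AWGN channel below, then \[ R(\mathscr{C})\le H(P_{\mathscr{C}})+\frac{1}{n^2}\left(\frac{1}{12}-\sum_{\ell=1}^L\frac{1}{12P_{\mathscr{C}}(x^{(\ell)})+1}\right)+\frac1n\left(\log_2\sqrt{2\pi}-\sum_{\ell=1}^L\log_2\sqrt{2\pi P_{\mathscr{C}}(x^{(\ell)})}\right)-\frac{\log_2 n}{n}\cdot\frac{L-1}{2}, \] where $H(P_{\mathscr{C}})=-\sum_{\ell=1}^L P_{\mathscr{C}}(x^{(\ell)})\log_2 P_{\mathscr{C}}(x^{(\ell)})$.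
   Context: Channel: $f_{\boldsymbol{Y}|\boldsymbol{X}}(\boldsymbol{y}|\boldsymbol{\nu})=\prod_{m=1}^n \frac{1}{\pi\sigma^2}\exp(-|y_m-\nu_m|^2/\sigma^2)$. An $(n,M,\mathcal{X})$-code is $\{(\boldsymbol{u}(i),\mathcal{D}_i)\}_{i=1}^M$ with $\boldsymbol{u}(i)\in\mathcal{X}^n$ and pairwise disjoint $\mathcal{D}_i\subseteq\mathbb{C}^n$; $R(\mathscr{C})=\frac{\log_2 M}{n}$; $\gamma(\mathscr{C})=\frac1M\sum_i\big(1-\int_{\mathcal{D}_i}f_{\boldsymbol{Y}|\boldsymbol{X}}(\boldsymbol{y}|\boldsymbol{u}(i))\mathrm{d}\boldsymbol{y}\big)$; $e_i=k_1\sum_m|u_m(i)|^2+k_2\sum_m|u_m(i)|^4$ with positive constants $k_1,k_2$; $\theta(\mathscr{C},B)=\frac1M\sum_i\mathbb{1}_{\{e_i<B\}}$; $(n,M,\mathcal{X},\epsilon,B,\delta)$-code means $\gamma(\mathscr{C})\le\epsilon$ and $\theta(\mathscr{C},B)\le\delta$. Types: $P_{\boldsymbol{u}(i)}(x)=\frac1n\sum_{m}\mathbb{1}_{\{u_m(i)=x\}}$, $P_{\mathscr{C}}=\frac1M\sum_iP_{\boldsymbol{u}(i)}$; constant composition means $P_{\boldsymbol{u}(i)}=P_{\mathscr{C}}$ for all $i$.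
   Formalization: The codewords u(1), ..., u(M) of $\mathscr{C}$ are pairwise distinct, a condition absent from the definition of an (n,M,X)-code in the context. The statement above fails without it. *)

theory Defs
  imports "HOL-Analysis.Analysis"
begin

text \<open>Blocklength n is CARD('n); vectors in C^n are of type complex^'n.
  Codewords u i (i < M) and decoding regions D i (i < M).\<close>

definition awgn_density :: "real \<Rightarrow> complex^'n \<Rightarrow> complex^'n \<Rightarrow> real" where
  "awgn_density \<sigma> y \<nu> =
     (\<Prod>m\<in>UNIV. 1 / (pi * \<sigma>\<^sup>2) * exp (- (cmod (y $ m - \<nu> $ m))\<^sup>2 / \<sigma>\<^sup>2))"

definition is_code :: "nat \<Rightarrow> complex set \<Rightarrow> (nat \<Rightarrow> complex^'n) \<Rightarrow> (nat \<Rightarrow> (complex^'n) set) \<Rightarrow> bool" where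
  "is_code M X u D \<longleftrightarrow>
     (\<forall>i<M. \<forall>m. u i $ m \<in> X) \<and>
     (\<forall>i<M. D i \<in> sets lborel) \<and>
     (\<forall>i<M. \<forall>j<M. i \<noteq> j \<longrightarrow> D i \<inter> D j = {})"

definition code_rate :: "nat \<Rightarrow> 'n::finite itself \<Rightarrow> real" where
  "code_rate M (_::'n itself) = log 2 (real M) / real CARD('n)"

definition error_prob :: "real \<Rightarrow> nat \<Rightarrow> (nat \<Rightarrow> complex^'n::finite) \<Rightarrow> (nat \<Rightarrow> (complex^'n) set) \<Rightarrow> real" where
  "error_prob \<sigma> M u D =
     (1 / real M) * (\<Sum>i<M. 1 - (LINT y : D i | lborel. awgn_density \<sigma> y (u i)))"

definition energy :: "real \<Rightarrow> real \<Rightarrow> complex^'n::finite \<Rightarrow> real" where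
  "energy k1 k2 v = k1 * (\<Sum>m\<in>UNIV. (cmod (v $ m))^2) + k2 * (\<Sum>m\<in>UNIV. (cmod (v $ m))^4)"

definition theta :: "real \<Rightarrow> real \<Rightarrow> nat \<Rightarrow> (nat \<Rightarrow> complex^'n::finite) \<Rightarrow> real \<Rightarrow> real" where
  "theta k1 k2 M u B = (1 / real M) * (\<Sum>i<M. if energy k1 k2 (u i) < B then 1 else 0)"

definition is_code_eBd ::
  "real \<Rightarrow> real \<Rightarrow> real \<Rightarrow> nat \<Rightarrow> complex set \<Rightarrow> real \<Rightarrow> real \<Rightarrow> real
   \<Rightarrow> (nat \<Rightarrow> complex^'n::finite) \<Rightarrow> (nat \<Rightarrow> (complex^'n) set) \<Rightarrow> bool" where
  "is_code_eBd \<sigma> k1 k2 M X \<epsilon> B \<delta> u D \<longleftrightarrow>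
     is_code M X u D \<and> error_prob \<sigma> M u D \<le> \<epsilon> \<and> theta k1 k2 M u B \<le> \<delta>"

definition seq_type :: "complex^'n::finite \<Rightarrow> complex \<Rightarrow> real" where
  "seq_type v x = real (card {m. v $ m = x}) / real CARD('n)"

definition code_type :: "nat \<Rightarrow> (nat \<Rightarrow> complex^'n::finite) \<Rightarrow> complex \<Rightarrow> real" where
  "code_type M u x = (1 / real M) * (\<Sum>i<M. seq_type (u i) x)"

definition constant_composition :: "nat \<Rightarrow> (nat \<Rightarrow> complex^'n::finite) \<Rightarrow> bool" where
  "constant_composition M u \<longleftrightarrow> (\<forall>i<M. seq_type (u i) = code_type M u)"

definition entropy_list :: "complex list \<Rightarrow> (complex \<Rightarrow> real) \<Rightarrow> real" where
  "entropy_list xs P = - (\<Sum>l<length xs. P (xs ! l) * log 2 (P (xs ! l)))"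

end

theory Submission
  imports Defs "HOL-Combinatorics.Multiset_Permutations"
begin

(*
  A constant composition code consists of M distinct rearrangements of one word whose symbol
  counts are k_x = n P(x), so M <= n! / prod_x k_x!.  Robbins' sharp form of Stirling's formula,
    sqrt(2 pi) n^(n+1/2) e^(-n) e^(1/(12n+1)) <= n! <= sqrt(2 pi) n^(n+1/2) e^(-n) e^(1/(12n)),
  bounds the logarithm of this multinomial coefficient, and dividing by n ln 2 gives the claim.
  The correction term 1/(12n) - sum_x 1/(12 k_x + n) of the bound is negative as soon as two
  symbols occur, so passing from nats to bits (a factor ln 2 < 1) only weakens it.

  Robbins' bounds come from sandwiching the differences of ln n! - (n+1/2) ln n + n between
  telescoping terms, via two-sided estimates of ln((1+x)/(1-x)); the limit ln sqrt(2 pi) of this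
  remainder is identified through Wallis' product.
*)

lemma ln_ratio_le:
  fixes x :: real assumes x: "0 \<le> x" "x < 1"
  shows "ln (1 + x) - ln (1 - x) \<le> 2*x + 2*x^3/(3*(1-x^2))"
proof -
  let ?f = "\<lambda>t::real. 2*t + 2*t^3/(3*(1-t^2)) - (ln (1 + t) - ln (1 - t))"
  have "?f 0 \<le> ?f x"
  proof (rule DERIV_nonneg_imp_increasing_open[OF x(1)])
    fix t :: real assume t: "0 < t" "t < x"
    have t1: "1 - t^2 > 0" using t x by (smt (verit) mult_less_cancel_right1 power2_eq_square)
    have "DERIV ?f t :> 2 + 2*(3*t^2*(3*(1-t^2)) - t^3*(3*(-2*t)))/(3*(1-t^2))^2 - (1/(1+t) + 1/(1-t))"
      using t x t1 by (auto intro!: derivative_eq_intros simp: power2_eq_square)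
    also have "2 + 2*(3*t^2*(3*(1-t^2)) - t^3*(3*(-2*t)))/(3*(1-t^2))^2 - (1/(1+t) + 1/(1-t))
        = 4*t^4/(3*(1-t^2)^2)"
      using t1 t x by (simp add: divide_simps) algebra
    finally show "\<exists>y. DERIV ?f t :> y \<and> y \<ge> 0" by auto
  next
    have "\<forall>t\<in>{0..x}. 1 - t^2 \<noteq> 0 \<and> 1 + t > 0 \<and> 1 - t > 0"
      using x by (auto simp: power2_eq_square) (smt (verit) mult_le_one mult_strict_mono)
    then show "continuous_on {0..x} ?f" by (intro continuous_intros) auto
  qed
  then show ?thesis by simp
qed

lemma ln_ratio_ge:
  fixes x :: real assumes x: "0 \<le> x" "x < 1"
  shows "2*x + 2*x^3/(3-x^2) \<le> ln (1 + x) - ln (1 - x)"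
proof -
  let ?f = "\<lambda>t::real. (ln (1 + t) - ln (1 - t)) - (2*t + 2*t^3/(3-t^2))"
  have "?f 0 \<le> ?f x"
  proof (rule DERIV_nonneg_imp_increasing_open[OF x(1)])
    fix t :: real assume t: "0 < t" "t < x"
    have t1: "1 - t^2 > 0" using t x by (smt (verit) mult_less_cancel_right1 power2_eq_square)
    then have t3: "3 - t^2 > 0" by simp
    have "DERIV ?f t :> (1/(1+t) + 1/(1-t)) - (2 + 2*(3*t^2*(3-t^2) - t^3*(-2*t))/(3-t^2)^2)"
      using t x t3 by (auto intro!: derivative_eq_intros simp: power2_eq_square)
    also have "(1/(1+t) + 1/(1-t)) - (2 + 2*(3*t^2*(3-t^2) - t^3*(-2*t))/(3-t^2)^2)
        = 8*t^4/((1-t^2)*(3-t^2)^2)"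
      using t1 t3 t x by (simp add: divide_simps) algebra
    finally show "\<exists>y. DERIV ?f t :> y \<and> y \<ge> 0" using t1 by auto
  next
    have "\<forall>t\<in>{0..x}. 3 - t^2 \<noteq> 0 \<and> 1 + t > 0 \<and> 1 - t > 0"
      using x by (auto simp: power2_eq_square) (smt (verit) mult_le_one mult_strict_mono)
    then show "continuous_on {0..x} ?f" by (intro continuous_intros) auto
  qed
  then show ?thesis by simp
qed

definition stirling_rem :: "nat \<Rightarrow> real" where
  "stirling_rem n = ln (fact n) - (real n + 1/2) * ln (real n) + real n"

lemma stirling_rem_diff:
  assumes "n \<ge> 1"
  defines "x \<equiv> 1 / (2 * real n + 1)"
  shows "stirling_rem n - stirling_rem (Suc n) = (real n + 1/2) * (ln (1 + x) - ln (1 - x)) - 1"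
proof -
  have n: "real n > 0" using assms by simp
  have "1 + x = (real n + 1) / (real n + 1/2)" "1 - x = real n / (real n + 1/2)"
    using n by (simp_all add: x_def field_simps)
  then have ratio: "ln (1 + x) - ln (1 - x) = ln (real n + 1) - ln (real n)"
    using n by (simp add: ln_div)
  have "ln (fact (Suc n) :: real) = ln (real n + 1) + ln (fact n)"
    by (simp add: ln_mult_pos add.commute)
  then show ?thesis unfolding ratio stirling_rem_def by (simp add: algebra_simps)
qed

lemma stirling_rem_diff_le:
  assumes "n \<ge> 1"
  shows "stirling_rem n - stirling_rem (Suc n) \<le> 1/(12*real n) - 1/(12*real (Suc n))"
proof -
  define x where "x = 1 / (2 * real n + 1)"
  have x: "0 \<le> x" "x < 1" using assms by (auto simp: x_def)
  have "stirling_rem n - stirling_rem (Suc n) \<le> (real n + 1/2) * (2*x + 2*x^3/(3*(1-x^2))) - 1"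
    unfolding stirling_rem_diff[OF assms] x_def[symmetric]
    using ln_ratio_le[OF x] by (intro diff_right_mono mult_left_mono) auto
  also have "\<dots> = 1/(12*real n) - 1/(12*real (Suc n))"
  proof -
    define a where "a = 2 * real n + 1"
    have a: "a \<ge> 3" "a^2 - 1 > 0" using assms power_mono[of 3 a 2] by (auto simp: a_def)
    have xa: "x = 1/a" "real n + 1/2 = a/2" by (simp_all add: x_def a_def)
    have "2*x^3/(3*(1-x^2)) = 2/(3*a*(a^2-1))"
      using a by (simp add: xa field_simps power2_eq_square power3_eq_cube)
    then have "(real n + 1/2) * (2*x + 2*x^3/(3*(1-x^2))) - 1 = a/2 * (2/(3*a*(a^2-1)))"
      using a by (simp add: xa distrib_left)
    also have "\<dots> = 1/(3*(a^2-1))" using a by simp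
    also have "a^2 - 1 = 4 * real n * (real n + 1)"
      by (simp add: a_def power2_eq_square algebra_simps)
    also have "1/(3*(4 * real n * (real n + 1))) = 1/(12*real n) - 1/(12*real (Suc n))"
      using assms by (simp add: field_simps)
    finally show ?thesis .
  qed
  finally show ?thesis .
qed

lemma stirling_rem_diff_ge:
  assumes "n \<ge> 1"
  shows "1/(12*real n + 1) - 1/(12*real (Suc n) + 1) \<le> stirling_rem n - stirling_rem (Suc n)"
proof -
  define x where "x = 1 / (2 * real n + 1)"
  have x: "0 \<le> x" "x < 1" using assms by (auto simp: x_def)
  have "1/(12*real n + 1) - 1/(12*real (Suc n) + 1) \<le> (real n + 1/2) * (2*x + 2*x^3/(3-x^2)) - 1"
  proof -
    define a where "a = 2 * real n + 1"
    have a: "a \<ge> 3" "3*a^2 - 1 > 0" using assms power_mono[of 3 a 2] by (auto simp: a_def)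
    have xa: "x = 1/a" "real n + 1/2 = a/2" by (simp_all add: x_def a_def)
    have "2*x^3/(3-x^2) = 2/(a*(3*a^2-1))"
      using a by (simp add: xa field_simps power2_eq_square power3_eq_cube)
    then have "(real n + 1/2) * (2*x + 2*x^3/(3-x^2)) - 1 = 1/(3*a^2 - 1)"
      using a by (simp add: xa distrib_left)
    moreover have "1/(12*real n + 1) - 1/(12*real (Suc n) + 1) = 12/((12*real n + 1)*(12*real n + 13))"
      by (simp add: field_simps)
    moreover have "12/((12*real n + 1)*(12*real n + 13)) \<le> 1/(3*a^2 - 1)"
      using a by (simp add: divide_simps a_def power2_eq_square algebra_simps)
    ultimately show ?thesis by simp
  qed
  also have "\<dots> \<le> stirling_rem n - stirling_rem (Suc n)"
    unfolding stirling_rem_diff[OF assms] x_def[symmetric]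
    using ln_ratio_ge[OF x] by (intro diff_right_mono mult_left_mono) auto
  finally show ?thesis .
qed

lemma stirling_rem_convergent:
  obtains C where "stirling_rem \<longlonglongrightarrow> C"
    and "\<And>n. n \<ge> 1 \<Longrightarrow> stirling_rem n - 1/(12*real n) \<le> C"
    and "\<And>n. n \<ge> 1 \<Longrightarrow> C \<le> stirling_rem n - 1/(12*real n + 1)"
proof -
  define A where "A k = stirling_rem (Suc k) - 1/(12*real (Suc k))" for k
  define B where "B k = stirling_rem (Suc k) - 1/(12*real (Suc k) + 1)" for k
  have A_inc: "incseq A"
  proof (rule incseq_SucI)
    show "A k \<le> A (Suc k)" for k using stirling_rem_diff_le[of "Suc k"] by (simp add: A_def)
  qed
  have B_dec: "decseq B"
  proof (rule decseq_SucI)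
    show "B (Suc k) \<le> B k" for k using stirling_rem_diff_ge[of "Suc k"] by (simp add: B_def)
  qed
  have "A k \<le> B k" for k
    unfolding A_def B_def by (intro diff_left_mono frac_le) auto
  then have "A k \<le> B 0" for k
    using decseqD[OF B_dec, of 0 k] by (meson order_trans zero_le)
  then obtain C where A_lim: "A \<longlonglongrightarrow> C" using incseq_convergent[OF A_inc] by blast
  have vanish: "(\<lambda>k. 1/(12*real (Suc k) + d)) \<longlonglongrightarrow> 0" if "d \<ge> 0" for d :: real
  proof (rule Lim_null_comparison)
    show "\<forall>\<^sub>F k in sequentially. norm (1/(12*real (Suc k) + d)) \<le> inverse (real (Suc k))"
      using that by (intro always_eventually allI) (simp add: inverse_eq_divide frac_le)
  qed (rule LIMSEQ_inverse_real_of_nat)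
  have "(\<lambda>k. A k + 1/(12*real (Suc k) + 0)) \<longlonglongrightarrow> C + 0"
    by (intro tendsto_add A_lim vanish) simp
  then have Suc_lim: "(\<lambda>k. stirling_rem (Suc k)) \<longlonglongrightarrow> C" by (simp add: A_def)
  have "(\<lambda>k. stirling_rem (Suc k) - 1/(12*real (Suc k) + 1)) \<longlonglongrightarrow> C - 0"
    by (intro tendsto_diff Suc_lim vanish) simp
  then have B_lim: "B \<longlonglongrightarrow> C" unfolding B_def[abs_def] by simp
  show thesis
  proof
    show "stirling_rem \<longlonglongrightarrow> C" using Suc_lim by (rule LIMSEQ_imp_Suc)
  next
    fix n :: nat assume "n \<ge> 1"
    then obtain k where k: "n = Suc k" by (cases n) auto
    show "stirling_rem n - 1/(12*real n) \<le> C" using incseq_le[OF A_inc A_lim, of k] by (simp add: A_def k)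
    show "C \<le> stirling_rem n - 1/(12*real n + 1)" using decseq_ge[OF B_dec B_lim, of k] by (simp add: B_def k)
  qed
qed

lemma wallis_partial_product_eq:
  "(\<Prod>k=1..n. (4*real k^2) / (4*real k^2 - 1)) =
     2^(4*n) * (fact n)^4 / ((fact (2*n))^2 * (2*real n+1))"
proof (induction n)
  case 0 then show ?case by simp
next
  case (Suc n)
  have "(\<Prod>k=1..Suc n. (4*real k^2) / (4*real k^2 - 1)) =
      (\<Prod>k=1..n. (4*real k^2) / (4*real k^2 - 1)) * (4*(real n + 1)^2 / ((2*real n+1)*(2*real n+3)))"
    by (simp add: prod.cl_ivl_Suc power2_eq_square algebra_simps)
  also have "\<dots> = 2^(4*Suc n) * (fact (Suc n))^4 / ((fact (2*Suc n))^2 * (2*real (Suc n)+1))"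
  proof -
    have "(fact (2 * Suc n) :: real) = (2*real n+2)*(2*real n+1)*fact (2*n)"
      by (simp add: algebra_simps)
    moreover have "(fact n :: real) > 0" "(fact (2*n) :: real) > 0" by auto
    ultimately show ?thesis unfolding Suc.IH by (simp add: power_add divide_simps) (simp add: eval_nat_numeral algebra_simps)
  qed
  finally show ?case .
qed

lemma ln_wallis_partial_product:
  assumes "n \<ge> 1"
  shows "ln (\<Prod>k=1..n. (4*real k^2) / (4*real k^2 - 1))
       = 4 * stirling_rem n - 2 * stirling_rem (2*n) + ln (real n / (2*real n+1)) - ln 2"
proof -
  have "ln (\<Prod>k=1..n. (4*real k^2) / (4*real k^2 - 1))
      = real (4*n) * ln 2 + 4 * ln (fact n) - 2 * ln (fact (2*n)) - ln (2*real n+1)"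
    unfolding wallis_partial_product_eq by (simp add: ln_div ln_mult ln_realpow)
  moreover have "ln (real (2*n)) = ln 2 + ln (real n)" "ln (real n / (2*real n+1)) = ln (real n) - ln (2*real n+1)"
    using assms by (simp_all add: ln_mult ln_div)
  ultimately show ?thesis by (simp add: stirling_rem_def algebra_simps)
qed

lemma stirling_rem_limit:
  assumes "stirling_rem \<longlonglongrightarrow> C"
  shows "C = ln (2*pi) / 2"
proof -
  have "(\<lambda>n. stirling_rem (2*n)) \<longlonglongrightarrow> C"
    using LIMSEQ_subseq_LIMSEQ[OF assms, of "(*) 2"] by (simp add: strict_mono_def comp_def)
  moreover have "(\<lambda>n. ln (real n / (2*real n+1))) \<longlonglongrightarrow> ln (1/2)"
  proof (intro tendsto_ln)
    have "(\<lambda>n. 1 / (2 + inverse (real n))) \<longlonglongrightarrow> 1 / (2 + 0)"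
      by (intro tendsto_intros lim_inverse_n) auto
    moreover have "\<forall>\<^sub>F n in sequentially. 1 / (2 + inverse (real n)) = real n / (2*real n+1)"
      using eventually_ge_at_top[of 1] by eventually_elim (simp add: field_simps)
    ultimately show "(\<lambda>n. real n / (2*real n+1)) \<longlonglongrightarrow> 1/2"
      by (simp add: Lim_transform_eventually)
  qed simp
  ultimately have "(\<lambda>n. 4 * stirling_rem n - 2 * stirling_rem (2*n) + ln (real n / (2*real n+1)) - ln 2)
      \<longlonglongrightarrow> 4*C - 2*C + ln (1/2) - ln 2"
    by (intro tendsto_diff tendsto_add tendsto_mult_left assms tendsto_const)
  moreover have "(\<lambda>n. 4 * stirling_rem n - 2 * stirling_rem (2*n) + ln (real n / (2*real n+1)) - ln 2)
      \<longlonglongrightarrow> ln (pi/2)"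
  proof (rule Lim_transform_eventually)
    show "(\<lambda>n. ln (\<Prod>k=1..n. (4*real k^2) / (4*real k^2 - 1))) \<longlonglongrightarrow> ln (pi/2)"
      by (intro tendsto_intros wallis) simp
    show "\<forall>\<^sub>F n in sequentially. ln (\<Prod>k=1..n. (4*real k^2) / (4*real k^2 - 1)) =
        4 * stirling_rem n - 2 * stirling_rem (2*n) + ln (real n / (2*real n+1)) - ln 2"
      using eventually_ge_at_top[of 1] by eventually_elim (rule ln_wallis_partial_product)
  qed
  ultimately have "4*C - 2*C + ln (1/2) - ln 2 = ln (pi/2)" using LIMSEQ_unique by fastforce
  then show ?thesis by (simp add: ln_div ln_mult)
qed

lemma ln_fact_le:
  assumes "n \<ge> 1"
  shows "ln (fact n) \<le> ln (2*pi)/2 + (real n + 1/2) * ln (real n) - real n + 1/(12*real n)"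
proof -
  obtain C where lim: "stirling_rem \<longlonglongrightarrow> C" and bound: "stirling_rem n - 1/(12*real n) \<le> C"
    using stirling_rem_convergent assms by metis
  then show ?thesis using stirling_rem_limit[OF lim] by (simp add: stirling_rem_def)
qed

lemma ln_fact_ge:
  assumes "n \<ge> 1"
  shows "ln (2*pi)/2 + (real n + 1/2) * ln (real n) - real n + 1/(12*real n + 1) \<le> ln (fact n)"
proof -
  obtain C where lim: "stirling_rem \<longlonglongrightarrow> C" and bound: "C \<le> stirling_rem n - 1/(12*real n + 1)"
    using stirling_rem_convergent assms by metis
  then show ?thesis using stirling_rem_limit[OF lim] by (simp add: stirling_rem_def)
qed

lemma ln_multinomial_le:
  fixes k :: "'a \<Rightarrow> nat"
  assumes "finite S" "S \<noteq> {}" "\<forall>x\<in>S. k x \<ge> 1" "sum k S = n"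
  shows "ln (fact n) - (\<Sum>x\<in>S. ln (fact (k x)))
     \<le> (1 - real (card S)) * (ln (2*pi)/2) + (real n + 1/2) * ln (real n)
        - (\<Sum>x\<in>S. (real (k x) + 1/2) * ln (real (k x)))
        + (1/(12*real n) - (\<Sum>x\<in>S. 1/(12*real (k x) + 1)))"
proof -
  have "n \<ge> 1"
    using assms sum_mono[of S "\<lambda>_. 1" k] by (auto simp: Suc_le_eq card_gt_0_iff)
  then have "ln (fact n) \<le> ln (2*pi)/2 + (real n + 1/2) * ln (real n) - real n + 1/(12*real n)"
    by (rule ln_fact_le)
  moreover have "(\<Sum>x\<in>S. ln (2*pi)/2 + (real (k x) + 1/2) * ln (real (k x)) - real (k x) + 1/(12*real (k x) + 1))
      \<le> (\<Sum>x\<in>S. ln (fact (k x)))"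
    using assms(3) by (intro sum_mono ln_fact_ge) auto
  moreover have "(\<Sum>x\<in>S. real (k x)) = real n"
    using assms(4) by (metis of_nat_sum)
  ultimately show ?thesis
    by (simp add: sum.distrib sum_subtractf algebra_simps add_divide_distrib diff_divide_distrib)
qed

lemma robbins_correction_le:
  fixes k :: "'a \<Rightarrow> nat"
  assumes "finite S" "card S \<ge> 2" "\<forall>x\<in>S. k x \<ge> 1" "sum k S = n"
  shows "1/(12*real n) - (\<Sum>x\<in>S. 1/(12*real (k x) + 1))
     \<le> ln 2 * (1/(12*real n) - (\<Sum>x\<in>S. 1/(12*real (k x) + real n)))"
proof -
  define Q where "Q = 1/(12*real n) - (\<Sum>x\<in>S. 1/(12*real (k x) + real n))"
  obtain a b where ab: "a \<in> S" "b \<in> S" "a \<noteq> b"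
    using assms(2) by (meson card_2_iff' ex_card subsetD)
  have k_le: "k x \<le> n" if "x \<in> S" for x
    using member_le_sum[OF that, of k] assms(1,4) by simp
  then have n: "real n \<ge> 1" using assms(3) ab(1) by force
  have term_ge: "1/(13*real n) \<le> 1/(12*real (k x) + real n)" if "x \<in> S" for x
    using k_le[OF that] assms(3) that n by (intro frac_le) auto
  have "2/(13*real n) \<le> (\<Sum>x\<in>{a,b}. 1/(12*real (k x) + real n))"
    using term_ge[OF ab(1)] term_ge[OF ab(2)] ab(3) by simp
  also have "\<dots> \<le> (\<Sum>x\<in>S. 1/(12*real (k x) + real n))"
    using ab assms(1) n by (intro sum_mono2) auto
  finally have "Q \<le> 0" using n by (simp add: Q_def field_simps)
  then have "Q \<le> ln 2 * Q" using ln_2_less_1 by (simp add: mult_le_cancel_right1)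
  moreover have "(\<Sum>x\<in>S. 1/(12*real (k x) + real n)) \<le> (\<Sum>x\<in>S. 1/(12*real (k x) + 1))"
    using n by (intro sum_mono frac_le) auto
  ultimately show ?thesis by (simp add: Q_def)
qed

definition rate_bound :: "'a set \<Rightarrow> ('a \<Rightarrow> real) \<Rightarrow> nat \<Rightarrow> real" where
  "rate_bound S P n =
     - (\<Sum>x\<in>S. P x * log 2 (P x))
     + 1 / (real n)\<^sup>2 * (1/12 - (\<Sum>x\<in>S. 1 / (12 * P x + 1)))
     + 1 / real n * (log 2 (sqrt (2 * pi)) - (\<Sum>x\<in>S. log 2 (sqrt (2 * pi * P x))))
     - log 2 (real n) / real n * ((real (card S) - 1) / 2)"

lemma entropy_scaled_eq:
  fixes K :: "'a \<Rightarrow> real"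
  assumes "\<forall>x\<in>S. K x > 0" "sum K S = N" "N > 0"
  shows "(\<Sum>x\<in>S. K x / N * log 2 (K x / N)) * (N * ln 2) = (\<Sum>x\<in>S. K x * ln (K x)) - N * ln N"
proof -
  have "(\<Sum>x\<in>S. K x / N * log 2 (K x / N)) * (N * ln 2) = (\<Sum>x\<in>S. K x * ln (K x) - K x * ln N)"
    unfolding sum_distrib_right using assms(1,3) by (intro sum.cong) (simp_all add: log_def ln_div field_simps)
  then show ?thesis using assms(2) by (simp add: sum_subtractf sum_distrib_right[symmetric])
qed

lemma sum_log_sqrt_scaled_eq:
  fixes K :: "'a \<Rightarrow> real"
  assumes "\<forall>x\<in>S. K x > 0" "N > 0"
  shows "(\<Sum>x\<in>S. log 2 (sqrt (2*pi*(K x/N)))) * ln 2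
     = real (card S) * (ln (2*pi)/2) + (\<Sum>x\<in>S. ln (K x))/2 - real (card S) * (ln N/2)"
proof -
  have "log 2 (sqrt (2*pi*(K x/N))) * ln 2 = ln (2*pi)/2 + ln (K x)/2 - ln N/2" if "x \<in> S" for x
  proof -
    have "K x > 0" using assms(1) that by blast
    then have "ln (2*pi*(K x/N)) = ln (2*pi) + (ln (K x) - ln N)"
      using assms(2) ln_mult[of "2*pi" "K x / N"] by (simp add: ln_div)
    then show ?thesis using \<open>K x > 0\<close> assms(2) by (simp add: log_def ln_sqrt)
  qed
  then have "(\<Sum>x\<in>S. log 2 (sqrt (2*pi*(K x/N)))) * ln 2 = (\<Sum>x\<in>S. ln (2*pi)/2 + ln (K x)/2 - ln N/2)"
    unfolding sum_distrib_right by (rule sum.cong[OF refl])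
  also have "\<dots> = real (card S) * (ln (2*pi)/2) + (\<Sum>x\<in>S. ln (K x))/2 - real (card S) * (ln N/2)"
    by (simp add: sum.distrib sum_subtractf sum_divide_distrib)
  finally show ?thesis .
qed

lemma rate_bound_scaled_eq:
  fixes k :: "'a \<Rightarrow> nat"
  assumes "\<forall>x\<in>S. k x \<ge> 1" "sum k S = n" "n \<ge> 1"
  shows "rate_bound S (\<lambda>x. real (k x) / real n) n * (real n * ln 2)
     = (1 - real (card S)) * (ln (2*pi)/2) + (real n + 1/2) * ln (real n)
        - (\<Sum>x\<in>S. (real (k x) + 1/2) * ln (real (k x)))
        + ln 2 * (1/(12*real n) - (\<Sum>x\<in>S. 1/(12*real (k x) + real n)))"
proof -
  define N where "N = real n"
  define K where "K x = real (k x)" for x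
  have N: "N > 0" using assms(3) by (simp add: N_def)
  have K: "\<forall>x\<in>S. K x > 0" using assms(1) by (simp add: K_def Suc_le_eq)
  have sum_K: "sum K S = N" unfolding K_def N_def using assms(2) by (metis of_nat_sum)
  have scale: "1 / N * (a - b) * (N * ln 2) = a * ln 2 - b * ln 2" for a b
    using N by (simp add: field_simps)
  have correction: "1 / N\<^sup>2 * (1/12 - (\<Sum>x\<in>S. 1 / (12 * (K x / N) + 1))) * (N * ln 2)
      = ln 2 * (1/(12*N) - (\<Sum>x\<in>S. 1/(12*K x + N)))"
  proof -
    have "(\<Sum>x\<in>S. 1 / (12 * (K x / N) + 1)) = N * (\<Sum>x\<in>S. 1/(12*K x + N))"
      unfolding sum_distrib_left using N K by (intro sum.cong) (auto simp: field_simps)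
    then show ?thesis using N by (simp add: field_simps power2_eq_square)
  qed
  have gaussian: "1 / N * (log 2 (sqrt (2*pi)) - (\<Sum>x\<in>S. log 2 (sqrt (2*pi*(K x/N))))) * (N * ln 2)
      = (1 - real (card S)) * (ln (2*pi)/2) - (\<Sum>x\<in>S. ln (K x))/2 + real (card S) / 2 * ln N"
    unfolding scale sum_log_sqrt_scaled_eq[OF K N] by (simp add: log_def ln_sqrt field_simps)
  have "rate_bound S (\<lambda>x. K x / N) n * (N * ln 2)
     = - ((\<Sum>x\<in>S. K x / N * log 2 (K x / N)) * (N * ln 2))
       + 1 / N\<^sup>2 * (1/12 - (\<Sum>x\<in>S. 1 / (12 * (K x / N) + 1))) * (N * ln 2)
       + 1 / N * (log 2 (sqrt (2*pi)) - (\<Sum>x\<in>S. log 2 (sqrt (2*pi*(K x/N))))) * (N * ln 2)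
       - ln N * ((real (card S) - 1) / 2)"
  proof -
    have "log 2 N / N * c * (N * ln 2) = ln N * c" for c
      using N by (simp add: log_def)
    then show ?thesis
      unfolding rate_bound_def N_def[symmetric] by (simp only: distrib_right left_diff_distrib mult_minus_left)
  qed
  also have "\<dots> = (1 - real (card S)) * (ln (2*pi)/2) + (N + 1/2) * ln N
        - (\<Sum>x\<in>S. (K x + 1/2) * ln (K x)) + ln 2 * (1/(12*N) - (\<Sum>x\<in>S. 1/(12*K x + N)))"
  proof -
    have "(\<Sum>x\<in>S. (K x + 1/2) * ln (K x)) = (\<Sum>x\<in>S. K x * ln (K x)) + (\<Sum>x\<in>S. ln (K x))/2"
      by (simp add: distrib_right sum.distrib sum_divide_distrib)
    then show ?thesis
      unfolding entropy_scaled_eq[OF K sum_K N] correction gaussian by (simp add: field_simps)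
  qed
  finally show ?thesis by (simp add: N_def K_def)
qed

lemma rate_le_rate_bound:
  fixes k :: "'a \<Rightarrow> nat"
  assumes S: "finite S" "S \<noteq> {}" and k: "\<forall>x\<in>S. k x \<ge> 1" "sum k S = n"
    and M: "M \<ge> 1" "real M * (\<Prod>x\<in>S. fact (k x)) \<le> fact n"
  shows "log 2 (real M) / real n \<le> rate_bound S (\<lambda>x. real (k x) / real n) n"
proof -
  have n: "n \<ge> 1"
    using S k sum_mono[of S "\<lambda>_. 1" k] by (auto simp: Suc_le_eq card_gt_0_iff)
  show ?thesis
  proof (cases "card S \<ge> 2")
    case True
    have fact_pos: "(\<Prod>x\<in>S. fact (k x) :: real) > 0" by (intro prod_pos) auto
    have "ln (real M) + (\<Sum>x\<in>S. ln (fact (k x))) = ln (real M * (\<Prod>x\<in>S. fact (k x)))"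
      using M fact_pos S by (simp add: ln_mult ln_prod)
    also have "\<dots> \<le> ln (fact n)" using M fact_pos by simp
    finally have "ln (real M) \<le> ln (fact n) - (\<Sum>x\<in>S. ln (fact (k x)))" by simp
    also have "\<dots> \<le> rate_bound S (\<lambda>x. real (k x) / real n) n * (real n * ln 2)"
      unfolding rate_bound_scaled_eq[OF k n]
      using ln_multinomial_le[OF S k] robbins_correction_le[OF S(1) True k] by linarith
    moreover have "log 2 (real M) / real n = ln (real M) / (real n * ln 2)"
      by (simp add: log_def)
    ultimately show ?thesis using n by (simp add: pos_divide_le_eq)
  next
    case False
    moreover have "card S > 0" using S by (simp add: card_gt_0_iff)
    ultimately have "card S = 1" by linarith
    then obtain a where a: "S = {a}" by (rule card_1_singletonE)
    then have "k a = n" using k by simp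
    then have "real M * fact n \<le> 1 * fact n" using M(2) a by simp
    then have "M = 1" using M(1) by (subst (asm) mult_le_cancel_right) simp
    then show ?thesis using n a \<open>k a = n\<close> by (simp add: rate_bound_def)
  qed
qed

lemma card_rearrangements_mult_prod_fact_le:
  fixes v :: "'a^'n::finite" and V :: "('a^'n) set"
  assumes "\<And>w x. w \<in> V \<Longrightarrow> card {m. w $ m = x} = card {m. v $ m = x}"
  shows "card V * (\<Prod>x\<in>range (($) v). fact (card {m. v $ m = x})) \<le> fact CARD('n)"
proof -
  obtain ms :: "'n list" where ms: "distinct ms" "set ms = UNIV"
    using finite_distinct_list[of "UNIV :: 'n set"] by auto
  define entries where "entries w = map (($) w) ms" for w :: "'a^'n"
  define A where "A = mset (entries v)"
  have count_entries: "count (mset (entries w)) x = card {m. w $ m = x}" for w x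
  proof -
    have "count (mset (entries w)) x = length (filter (\<lambda>m. x = w $ m) ms)"
      by (simp add: entries_def count_mset count_list_eq_length_filter filter_map comp_def del: mset_map)
    also have "\<dots> = card {m. w $ m = x}" using ms by (simp add: distinct_length_filter eq_commute)
    finally show ?thesis .
  qed
  have "mset (entries w) = A" if "w \<in> V" for w
    by (rule multiset_eqI) (simp add: A_def count_entries assms[OF that])
  then have "entries ` V \<subseteq> permutations_of_multiset A"
    by (auto intro: permutations_of_multisetI)
  moreover have "inj_on entries V"
    using ms by (intro inj_onI) (simp add: entries_def vec_eq_iff map_eq_conv)
  ultimately have "card V \<le> card (permutations_of_multiset A)"
    using card_inj_on_le finite_permutations_of_multiset by blast
  then have "card V * (\<Prod>x\<in>set_mset A. fact (count A x)) \<le> fact (size A)"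
    using card_permutations_of_multiset_aux[of A] by (metis mult_le_mono1)
  moreover have "set_mset A = range (($) v)"
    using ms by (simp add: A_def entries_def)
  moreover have "size A = CARD('n)"
    using ms by (simp add: A_def entries_def flip: distinct_card)
  ultimately show ?thesis by (simp add: A_def count_entries)
qed

lemma sum_card_fibres:
  fixes f :: "'n::finite \<Rightarrow> 'a"
  assumes "finite S" "range f \<subseteq> S"
  shows "(\<Sum>x\<in>S. card {m. f m = x}) = CARD('n)"
proof -
  have "card (\<Union>x\<in>S. {m. f m = x}) = (\<Sum>x\<in>S. card {m. f m = x})"
    using assms(1) by (intro card_UN_disjoint) auto
  moreover have "(\<Union>x\<in>S. {m. f m = x}) = UNIV" using assms(2) by auto
  ultimately show ?thesis by simp
qed

lemma constant_composition_counts: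
  fixes u :: "nat \<Rightarrow> complex^'n::finite"
  assumes "constant_composition M u" "i < M"
  shows "card {m. u i $ m = x} = card {m. u 0 $ m = x}"
    and "code_type M u x = real (card {m. u 0 $ m = x}) / real CARD('n)"
proof -
  have "seq_type (u i) = code_type M u" "seq_type (u 0) = code_type M u"
    using assms unfolding constant_composition_def by blast+
  then have types: "seq_type (u i) x = code_type M u x" "seq_type (u 0) x = code_type M u x"
    by simp_all
  then show "code_type M u x = real (card {m. u 0 $ m = x}) / real CARD('n)"
    by (simp add: seq_type_def)
  from types have "real (card {m. u i $ m = x}) / real CARD('n) = real (card {m. u 0 $ m = x}) / real CARD('n)"
    by (simp add: seq_type_def)
  then show "card {m. u i $ m = x} = card {m. u 0 $ m = x}"
    by (simp add: divide_cancel_right)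
qed

lemma constant_composition_card_le:
  fixes u :: "nat \<Rightarrow> complex^'n::finite"
  assumes "inj_on u {..<M}" "constant_composition M u"
  shows "real M * (\<Prod>x\<in>range (($) (u 0)). fact (card {m. u 0 $ m = x})) \<le> fact CARD('n)"
proof -
  have "card {m. w $ m = x} = card {m. u 0 $ m = x}" if "w \<in> u ` {..<M}" for w x
    using that constant_composition_counts(1)[OF assms(2)] by blast
  then have "card (u ` {..<M}) * (\<Prod>x\<in>range (($) (u 0)). fact (card {m. u 0 $ m = x})) \<le> fact CARD('n)"
    by (rule card_rearrangements_mult_prod_fact_le)
  then have "real (M * (\<Prod>x\<in>range (($) (u 0)). fact (card {m. u 0 $ m = x}))) \<le> real (fact CARD('n))"
    using assms(1) by (simp only: card_image card_lessThan of_nat_le_iff)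
  then show ?thesis by (simp add: of_nat_prod)
qed

lemma rate_bound_distinct_list:
  assumes "distinct xs"
  shows "entropy_list xs P
       + 1 / (real n)\<^sup>2 * (1/12 - (\<Sum>l<length xs. 1 / (12 * P (xs ! l) + 1)))
       + 1 / real n * (log 2 (sqrt (2 * pi)) - (\<Sum>l<length xs. log 2 (sqrt (2 * pi * P (xs ! l)))))
       - log 2 (real n) / real n * ((real (length xs) - 1) / 2)
     = rate_bound (set xs) P n"
proof -
  have list_sum: "(\<Sum>l<length xs. g (xs ! l)) = (\<Sum>x\<in>set xs. g x)" for g :: "complex \<Rightarrow> real"
    using sum.distinct_set_conv_list[OF assms, of g] by (simp add: sum_list_sum_nth atLeast0LessThan)
  show ?thesis
    unfolding entropy_list_def rate_bound_def distinct_card[OF assms]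
      list_sum[of "\<lambda>x. P x * log 2 (P x)"] list_sum[of "\<lambda>x. 1 / (12 * P x + 1)"]
      list_sum[of "\<lambda>x. log 2 (sqrt (2 * pi * P x))"] ..
qed

theorem theorem2:
  fixes xs :: "complex list"
    and u :: "nat \<Rightarrow> complex^'n::finite"
    and D :: "nat \<Rightarrow> (complex^'n) set"
    and M :: nat and \<sigma> k1 k2 \<epsilon> B \<delta> :: real
  assumes "distinct xs"
    and "\<sigma> > 0" and "k1 > 0" and "k2 > 0"
    and "inj_on u {..<M}"
    and "is_code_eBd \<sigma> k1 k2 M (set xs) \<epsilon> B \<delta> u D"
    and "constant_composition M u"
    and "\<forall>l<length xs. code_type M u (xs ! l) > 0"
  shows "code_rate M TYPE('n)
     \<le> entropy_list xs (code_type M u)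
       + 1 / (real CARD('n))\<^sup>2 *
           (1/12 - (\<Sum>l<length xs. 1 / (12 * code_type M u (xs ! l) + 1)))
       + 1 / real CARD('n) *
           (log 2 (sqrt (2 * pi)) - (\<Sum>l<length xs. log 2 (sqrt (2 * pi * code_type M u (xs ! l)))))
       - log 2 (real CARD('n)) / real CARD('n) * ((real (length xs) - 1) / 2)"
proof (cases "M = 0")
  case True
  then have "xs = []" using assms(8) by (cases xs) (auto simp: code_type_def)
  moreover have "0 \<le> 1 / (real CARD('n))\<^sup>2 * (1/12) + 1 / real CARD('n) * log 2 (sqrt (2 * pi))
      + log 2 (real CARD('n)) / real CARD('n) * (1/2)"
    using pi_gt3 by (intro add_nonneg_nonneg mult_nonneg_nonneg) auto
  ultimately show ?thesis using True by (simp add: code_rate_def entropy_list_def log_def[of 2 0])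
next
  case False
  define k where "k x = card {m. u 0 $ m = x}" for x
  have P: "code_type M u = (\<lambda>x. real (k x) / real CARD('n))"
    using constant_composition_counts(2)[OF assms(7)] False by (auto simp: k_def)
  have k_pos: "k x > 0" if "x \<in> set xs" for x
    using that assms(8) by (auto simp: P in_set_conv_nth zero_less_divide_iff)
  have "range (($) (u 0)) \<subseteq> set xs"
    using assms(6) False by (auto simp: is_code_eBd_def is_code_def)
  moreover have "set xs \<subseteq> range (($) (u 0))"
    using k_pos by (force simp: k_def card_gt_0_iff)
  ultimately have range: "range (($) (u 0)) = set xs" by blast
  have "real M * (\<Prod>x\<in>set xs. fact (k x)) \<le> fact CARD('n)"
    using constant_composition_card_le[OF assms(5,7)] range by (simp add: k_def)
  moreover have "sum k (set xs) = CARD('n)"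
    using sum_card_fibres[of "set xs" "($) (u 0)"] range by (simp add: k_def)
  moreover have "\<forall>x\<in>set xs. k x \<ge> 1"
    using k_pos by (simp add: Suc_le_eq)
  ultimately have "log 2 (real M) / real CARD('n) \<le> rate_bound (set xs) (code_type M u) CARD('n)"
    unfolding P using False by (intro rate_le_rate_bound) auto
  then show ?thesis unfolding code_rate_def by (simp only: rate_bound_distinct_list[OF assms(1)])
qed

end
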